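(* Let $n\ge 3$. The metric dimension of the power graph $P(G(n))$ of the gyrogroup $G(n)$ (defined in the context) is $\psi(P(G(n)))=2^n-3$.
   Context: Let $n\ge 3$ be an integer and $m=2^{n-1}$. Let $P(n)=\{0,1,\dots,m-1\}$, $H(n)=\{m,m+1,\dots,2^n-1\}$ and $G(n)=P(n)\cup H(n)$. For $i,j\in G(n)$ let $t,s,k\in P(n)$ be the residues modulo $m$ (taken in $\{0,\dots,m-1\}$) of $i+j$, $i+(\frac m2-1)j$ and $(\frac m2+1)i+(\frac m2-1)j$, respectively, and define $i\oplus j=t$ if $i,j\in P(n)$; $i\oplus j=t+m$ if $i\in P(n),j\in H(n)$; $i\oplus j=s+m$ if $i\in H(n),j\in P(n)$; $i\oplus j=k$ if $i,j\in H(n)$. Then $(G(n),\oplus)$ is a gyrogroup with identity $e=0$. Powers are defined by $a^1=a$, $a^{k+1}=a^k\oplus a$. The power graph $P(G(n))$ is the simple undirected graph with vertex set $G(n)$ in which distinct vertices $u,v$ are adjacent if and only if $u^k=v$ or $v^k=u$ for some positive integer $k$. For a connected graph $G$ and an ordered set $U=\{u_1,\dots,u_s\}\subseteq V(G)$, the representation of $v$ is $r(v|U)=(d(v,u_1),\dots,d(v,u_s))$; $U$ is a resolving set if distinct vertices have distinct representations. The metric dimension $\psi(G)$ is the minimum cardinality of a resolving set. *)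

theory Defs
  imports Main
begin

definition gm :: "nat \<Rightarrow> nat" where "gm n = 2 ^ (n - 1)"

definition carrierG :: "nat \<Rightarrow> nat set" where "carrierG n = {0..<2 ^ n}"

definition gyro_op :: "nat \<Rightarrow> nat \<Rightarrow> nat \<Rightarrow> nat" where
  "gyro_op n i j =
    (let m = gm n;
         t = (i + j) mod m;
         s = (i + (m div 2 - 1) * j) mod m;
         k = ((m div 2 + 1) * i + (m div 2 - 1) * j) mod m
     in if i < m \<and> j < m then t
        else if i < m \<and> m \<le> j then t + m
        else if m \<le> i \<and> j < m then s + m
        else k)"

text \<open>Powers: a^1 = a, a^(k+1) = a^k (+) a. The value at exponent 0 is irrelevant (set to e = 0).\<close>
fun gpow :: "nat \<Rightarrow> nat \<Rightarrow> nat \<Rightarrow> nat" where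
  "gpow n a 0 = 0"
| "gpow n a (Suc 0) = a"
| "gpow n a (Suc (Suc k)) = gyro_op n (gpow n a (Suc k)) a"

definition power_adj :: "nat \<Rightarrow> nat \<Rightarrow> nat \<Rightarrow> bool" where
  "power_adj n u v \<longleftrightarrow> u \<in> carrierG n \<and> v \<in> carrierG n \<and> u \<noteq> v \<and>
     ((\<exists>k\<ge>1. gpow n u k = v) \<or> (\<exists>k\<ge>1. gpow n v k = u))"

fun walk_of_len :: "'a set \<Rightarrow> ('a \<Rightarrow> 'a \<Rightarrow> bool) \<Rightarrow> nat \<Rightarrow> 'a \<Rightarrow> 'a \<Rightarrow> bool" where
  "walk_of_len V E 0 u v \<longleftrightarrow> u = v \<and> u \<in> V"
| "walk_of_len V E (Suc l) u v \<longleftrightarrow> u \<in> V \<and> (\<exists>w\<in>V. E u w \<and> walk_of_len V E l w v)"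

definition gdist :: "'a set \<Rightarrow> ('a \<Rightarrow> 'a \<Rightarrow> bool) \<Rightarrow> 'a \<Rightarrow> 'a \<Rightarrow> nat" where
  "gdist V E u v = (LEAST l. walk_of_len V E l u v)"

definition resolving_set :: "'a set \<Rightarrow> ('a \<Rightarrow> 'a \<Rightarrow> bool) \<Rightarrow> 'a set \<Rightarrow> bool" where
  "resolving_set V E U \<longleftrightarrow> U \<subseteq> V \<and>
     (\<forall>u\<in>V. \<forall>v\<in>V. u \<noteq> v \<longrightarrow> (\<exists>w\<in>U. gdist V E u w \<noteq> gdist V E v w))"

definition metric_dim :: "'a set \<Rightarrow> ('a \<Rightarrow> 'a \<Rightarrow> bool) \<Rightarrow> nat" where
  "metric_dim V E = (LEAST c. \<exists>U. resolving_set V E U \<and> card U = c)"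

end

(*
  Inside P(n) the operation is addition modulo m = 2^(n-1), so P(n) is a cyclic 2-group: of two
  nonzero elements one is a multiple of the other, and the power graph on P(n) is complete. An
  element a of H(n) satisfies a (+) a = 0, so its only powers are a and 0. Hence the power graph
  is a clique on P(n) with the m vertices of H(n) attached to 0 alone; all distances are 0, 1 or 2.
  The vertices 1, ..., m - 1 are pairwise twins (equidistant from every other vertex), and so are
  the vertices of H(n). A resolving set contains all but at most one vertex of each twin class,
  hence has at least 2m - 3 = 2^n - 3 elements, and omitting exactly 0, 1 and m resolves.
*)

theory Submission
  imports Defs "HOL-Computational_Algebra.Primes"
begin

lemma gdist_refl: "u \<in> V \<Longrightarrow> gdist V E u u = 0"
  unfolding gdist_def by (rule Least_eq_0) simp

lemma gdist_eq_1: "u \<in> V \<Longrightarrow> v \<in> V \<Longrightarrow> u \<noteq> v \<Longrightarrow> E u v \<Longrightarrow> gdist V E u v = 1"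
  unfolding gdist_def
proof (rule Least_equality)
  show "walk_of_len V E 1 u v" if "u \<in> V" "v \<in> V" "E u v" using that by auto
  show "1 \<le> l" if "u \<noteq> v" "walk_of_len V E l u v" for l using that by (cases l) auto
qed

lemma gdist_eq_2:
  "u \<in> V \<Longrightarrow> v \<in> V \<Longrightarrow> w \<in> V \<Longrightarrow> u \<noteq> v \<Longrightarrow> \<not> E u v \<Longrightarrow> E u w \<Longrightarrow> E w v
    \<Longrightarrow> gdist V E u v = 2"
  unfolding gdist_def
proof (rule Least_equality)
  show "walk_of_len V E 2 u v" if "u \<in> V" "v \<in> V" "w \<in> V" "E u w" "E w v"
    using that by (auto simp: numeral_2_eq_2)
  show "2 \<le> l" if "u \<noteq> v" "\<not> E u v" "walk_of_len V E l u v" for l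
    using that by (cases l; cases "l - 1") auto
qed

lemma card_twins_diff_resolving_set_le_1:
  assumes res: "resolving_set V E U" and "S \<subseteq> V" "finite S"
    and twins: "\<And>p q w. p \<in> S \<Longrightarrow> q \<in> S \<Longrightarrow> w \<in> V \<Longrightarrow> w \<noteq> p \<Longrightarrow> w \<noteq> q
      \<Longrightarrow> gdist V E p w = gdist V E q w"
  shows "card (S - U) \<le> 1"
proof -
  have "p = q" if pq: "p \<in> S - U" "q \<in> S - U" for p q
  proof (rule ccontr)
    assume "p \<noteq> q"
    then obtain w where "w \<in> U" "gdist V E p w \<noteq> gdist V E q w"
      using res pq \<open>S \<subseteq> V\<close> unfolding resolving_set_def by blast
    with twins pq res show False unfolding resolving_set_def by blast
  qed
  then show ?thesis using \<open>finite S\<close> by (simp add: card_le_Suc0_iff_eq)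
qed

lemma metric_dim_eqI:
  assumes "resolving_set V E U" "card U = c"
    and "\<And>U. resolving_set V E U \<Longrightarrow> c \<le> card U"
  shows "metric_dim V E = c"
  unfolding metric_dim_def using assms by (intro Least_equality) blast+

lemma exists_pos_multiple_mod_eq:
  fixes u v m :: nat
  assumes "0 < u" "0 < m" "gcd u m dvd v"
  shows "\<exists>k\<ge>1. (k * u) mod m = v mod m"
proof -
  obtain x y where xy: "u * x = m * y + gcd u m" using bezout_nat[of u m] assms by auto
  obtain c where c: "v = gcd u m * c" using assms by (auto elim: dvdE)
  have "u * (x * c) = m * (y * c) + v" using xy c by (metis add_mult_distrib mult.assoc)
  then have "(u * (x * c)) mod m = v mod m" by (metis mod_mult_self3 mult.commute)
  then have "((x * c + m) * u) mod m = v mod m" by (simp add: algebra_simps)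
  moreover have "x * c + m \<ge> 1" using assms by simp
  ultimately show ?thesis by blast
qed

lemma prime_power_mod_multiple_either:
  fixes u v p :: nat
  assumes "prime p" "0 < u" "0 < v"
  shows "(\<exists>k\<ge>1. (k * u) mod p ^ r = v mod p ^ r) \<or> (\<exists>k\<ge>1. (k * v) mod p ^ r = u mod p ^ r)"
proof -
  obtain i j where i: "gcd u (p ^ r) = p ^ i" and j: "gcd v (p ^ r) = p ^ j"
    using divides_primepow_nat[OF \<open>prime p\<close>] gcd_dvd2 by metis
  have "0 < p ^ r" using \<open>prime p\<close> by (simp add: prime_gt_0_nat)
  then show ?thesis
  proof (cases "i \<le> j")
    case True
    then have "p ^ i dvd p ^ j" by (rule le_imp_power_dvd)
    then have "gcd u (p ^ r) dvd v" using i j by (metis gcd_dvd1 dvd_trans)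
    from exists_pos_multiple_mod_eq[OF \<open>0 < u\<close> \<open>0 < p ^ r\<close> this] show ?thesis ..
  next
    case False
    then have "p ^ j dvd p ^ i" by (simp add: le_imp_power_dvd)
    then have "gcd v (p ^ r) dvd u" using i j by (metis gcd_dvd1 dvd_trans)
    from exists_pos_multiple_mod_eq[OF \<open>0 < v\<close> \<open>0 < p ^ r\<close> this] show ?thesis ..
  qed
qed

lemma gm_pos: "0 < gm n"
  by (simp add: gm_def)

lemma two_power_eq_double_gm: "1 \<le> n \<Longrightarrow> 2 ^ n = 2 * gm n"
  unfolding gm_def by (cases n) simp_all

lemma gm_ge_4:
  assumes "3 \<le> n"
  shows "4 \<le> gm n"
proof -
  have "(2::nat) ^ 2 \<le> 2 ^ (n - 1)" using assms by (intro power_increasing) simp_all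
  then show ?thesis by (simp add: gm_def)
qed

lemma even_gm: "2 \<le> n \<Longrightarrow> even (gm n)"
  unfolding gm_def by simp

lemma mem_carrierG_iff: "1 \<le> n \<Longrightarrow> u \<in> carrierG n \<longleftrightarrow> u < 2 * gm n"
  by (simp add: carrierG_def two_power_eq_double_gm)

lemma gpow_of_lt_gm:
  assumes "a < gm n"
  shows "gpow n a k = (k * a) mod gm n"
  using assms
proof (induction n a k rule: gpow.induct)
  case (3 n a k)
  then have "gpow n a (Suc (Suc k)) = gyro_op n ((Suc k * a) mod gm n) a" by simp
  also have "\<dots> = ((Suc k * a) mod gm n + a) mod gm n"
    using 3 gm_pos[of n] by (simp add: gyro_op_def Let_def)
  also have "\<dots> = (Suc (Suc k) * a) mod gm n" by (metis mod_add_left_eq mult_Suc add.commute)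
  finally show ?case .
qed simp_all

lemma gpow_of_ge_gm:
  assumes "2 \<le> n" "gm n \<le> a" "a < 2 * gm n"
  shows "gpow n a k = (if odd k then a else 0)"
  using assms
proof (induction n a k rule: gpow.induct)
  case (3 n a k)
  have "gm n div 2 + 1 + (gm n div 2 - 1) = gm n"
    using even_gm[OF \<open>2 \<le> n\<close>] gm_pos[of n] by (elim evenE) auto
  then have "(gm n div 2 + 1) * a + (gm n div 2 - 1) * a = gm n * a"
    by (metis add_mult_distrib)
  then have "gyro_op n a a = 0"
    using 3 by (simp add: gyro_op_def Let_def)
  moreover have "gyro_op n 0 a = a"
    using 3 gm_pos[of n] by (simp add: gyro_op_def Let_def le_mod_geq)
  moreover have "gpow n a (Suc k) = (if odd k then 0 else a)"
    using "3.IH"[OF "3.prems"] by simp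
  ultimately show ?case by simp
qed simp_all

lemma exists_gpow_eq_0:
  assumes "2 \<le> n" "a < 2 * gm n"
  shows "\<exists>k\<ge>1. gpow n a k = 0"
proof (cases "a < gm n")
  case True
  then have "gpow n a (gm n) = 0" by (simp add: gpow_of_lt_gm)
  then show ?thesis using gm_pos[of n] by (intro exI[of _ "gm n"]) simp
next
  case False
  then have "gpow n a 2 = 0" using gpow_of_ge_gm assms by simp
  then show ?thesis by (intro exI[of _ 2]) simp
qed

lemma gpow_lt_gm_if_nontrivial:
  assumes "2 \<le> n" "a < 2 * gm n" "gpow n a k = b" "b \<noteq> 0" "b \<noteq> a"
  shows "a < gm n \<and> b < gm n"
proof (cases "a < gm n")
  case True
  then have "b = (k * a) mod gm n" using assms(3) by (simp add: gpow_of_lt_gm)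
  then show ?thesis using True gm_pos[of n] by simp
next
  case False
  then have "gpow n a k = (if odd k then a else 0)" using assms(1,2) by (simp add: gpow_of_ge_gm)
  then have "b = a \<or> b = 0" using assms(3) by presburger
  then show ?thesis using assms(4,5) by simp
qed

lemma power_adj_iff:
  assumes n: "2 \<le> n" and u: "u < 2 * gm n" and v: "v < 2 * gm n"
  shows "power_adj n u v \<longleftrightarrow> u \<noteq> v \<and> (u = 0 \<or> v = 0 \<or> (u < gm n \<and> v < gm n))"
proof
  assume adj: "power_adj n u v"
  then have "u \<noteq> v" by (simp add: power_adj_def)
  from adj consider k where "gpow n u k = v" | k where "gpow n v k = u"
    unfolding power_adj_def by auto
  then show "u \<noteq> v \<and> (u = 0 \<or> v = 0 \<or> (u < gm n \<and> v < gm n))"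
  proof cases
    case 1 with \<open>u \<noteq> v\<close> show ?thesis using gpow_lt_gm_if_nontrivial[OF n u 1] by auto
  next
    case 2 with \<open>u \<noteq> v\<close> show ?thesis using gpow_lt_gm_if_nontrivial[OF n v 2] by auto
  qed
next
  have uv: "u \<in> carrierG n" "v \<in> carrierG n" using n u v by (simp_all add: mem_carrierG_iff)
  assume adj: "u \<noteq> v \<and> (u = 0 \<or> v = 0 \<or> (u < gm n \<and> v < gm n))"
  then consider "u = 0" | "v = 0" | "0 < u" "0 < v" "u < gm n" "v < gm n" by blast
  then show "power_adj n u v"
  proof cases
    case 1 then show ?thesis using exists_gpow_eq_0[OF n v] adj uv unfolding power_adj_def by blast
  next
    case 2 then show ?thesis using exists_gpow_eq_0[OF n u] adj uv unfolding power_adj_def by blast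
  next
    case 3
    \<comment> \<open>P(n) is the cyclic group of order 2^(n-1), whose power graph is complete\<close>
    have "(\<exists>k\<ge>1. (k * u) mod gm n = v) \<or> (\<exists>k\<ge>1. (k * v) mod gm n = u)"
      using prime_power_mod_multiple_either[of 2 u v "n - 1"] 3 by (simp add: gm_def)
    then show ?thesis using 3 adj uv unfolding power_adj_def by (simp add: gpow_of_lt_gm)
  qed
qed

definition power_graph_dist :: "nat \<Rightarrow> nat \<Rightarrow> nat \<Rightarrow> nat" where
  "power_graph_dist n u v =
    (if u = v then 0 else if u = 0 \<or> v = 0 \<or> (u < gm n \<and> v < gm n) then 1 else 2)"

lemma power_graph_dist_eq_0_iff: "power_graph_dist n u v = 0 \<longleftrightarrow> u = v"
  by (simp add: power_graph_dist_def)

lemma gdist_power_graph: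
  assumes n: "2 \<le> n" and u: "u < 2 * gm n" and v: "v < 2 * gm n"
  shows "gdist (carrierG n) (power_adj n) u v = power_graph_dist n u v"
proof -
  have V: "u \<in> carrierG n" "v \<in> carrierG n" "0 \<in> carrierG n"
    using n u v by (simp_all add: mem_carrierG_iff)
  consider "u = v" | "u \<noteq> v" "u = 0 \<or> v = 0 \<or> (u < gm n \<and> v < gm n)"
    | "u \<noteq> v" "\<not> (u = 0 \<or> v = 0 \<or> (u < gm n \<and> v < gm n))" by blast
  then show ?thesis
  proof cases
    case 1 then show ?thesis using V by (simp add: gdist_refl power_graph_dist_def)
  next
    case 2 then show ?thesis using V power_adj_iff[OF n u v]
      by (simp add: gdist_eq_1 power_graph_dist_def)
  next
    case 3
    have z: "0 < 2 * gm n" using gm_pos[of n] by simp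
    have "\<not> power_adj n u v" "power_adj n u 0" "power_adj n 0 v"
      using 3 power_adj_iff[OF n u v] power_adj_iff[OF n u z] power_adj_iff[OF n z v] by simp_all
    then have "gdist (carrierG n) (power_adj n) u v = 2"
      using 3(1) V by (intro gdist_eq_2[where w = 0])
    then show ?thesis using 3 by (simp add: power_graph_dist_def)
  qed
qed

lemma resolving_set_power_graph:
  assumes n: "3 \<le> n"
  shows "resolving_set (carrierG n) (power_adj n) ({2..<gm n} \<union> {gm n + 1..<2 * gm n})"
    (is "resolving_set ?V ?E ?U")
  unfolding resolving_set_def
proof (intro conjI ballI impI)
  have V: "u \<in> ?V \<longleftrightarrow> u < 2 * gm n" for u using n by (simp add: mem_carrierG_iff)
  show "?U \<subseteq> ?V" by (auto simp: V)
  fix u v assume uv: "u \<in> ?V" "v \<in> ?V" "u \<noteq> v"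
  have "\<exists>w\<in>?U. power_graph_dist n u w \<noteq> power_graph_dist n v w"
  proof (cases "u \<in> ?U \<or> v \<in> ?U")
    case True
    then show ?thesis using uv(3) by (metis power_graph_dist_eq_0_iff)
  next
    case False
    then have "u \<in> {0, 1, gm n}" "v \<in> {0, 1, gm n}" using uv by (auto simp: V)
    then have "power_graph_dist n u 2 \<noteq> power_graph_dist n v 2
        \<or> power_graph_dist n u (gm n + 1) \<noteq> power_graph_dist n v (gm n + 1)"
      using uv(3) gm_ge_4[OF n] unfolding insert_iff empty_iff
      by (elim disjE) (simp_all add: power_graph_dist_def)
    moreover have "2 \<in> ?U" "gm n + 1 \<in> ?U" using gm_ge_4[OF n] by auto
    ultimately show ?thesis by blast
  qed
  then obtain w where w: "w \<in> ?U" "power_graph_dist n u w \<noteq> power_graph_dist n v w" by blast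
  have "u < 2 * gm n" "v < 2 * gm n" "w < 2 * gm n" using uv w(1) by (auto simp: V)
  moreover have "2 \<le> n" using n by simp
  ultimately have "gdist ?V ?E u w \<noteq> gdist ?V ?E v w" using w(2) by (simp add: gdist_power_graph)
  with w(1) show "\<exists>w\<in>?U. gdist ?V ?E u w \<noteq> gdist ?V ?E v w" by blast
qed

lemma card_resolving_set_power_graph_ge:
  assumes n: "2 \<le> n" and res: "resolving_set (carrierG n) (power_adj n) U"
  shows "2 ^ n - 3 \<le> card U"
proof -
  have V: "u \<in> carrierG n \<longleftrightarrow> u < 2 * gm n" for u using n by (simp add: mem_carrierG_iff)
  have twins: "card (S - U) \<le> 1" if S: "S = {1..<gm n} \<or> S = {gm n..<2 * gm n}" for S
  proof (rule card_twins_diff_resolving_set_le_1[OF res])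
    show "S \<subseteq> carrierG n" "finite S" using S by (auto simp: V)
    fix p q w assume pqw: "p \<in> S" "q \<in> S" "w \<in> carrierG n" "w \<noteq> p" "w \<noteq> q"
    then have "p < 2 * gm n" "q < 2 * gm n" "w < 2 * gm n" using S by (auto simp: V)
    with pqw S show "gdist (carrierG n) (power_adj n) p w = gdist (carrierG n) (power_adj n) q w"
      by (auto simp: gdist_power_graph[OF n] power_graph_dist_def)
  qed
  define S where "S = {1..<2 * gm n}"
  have "S - U = ({1..<gm n} - U) \<union> ({gm n..<2 * gm n} - U)" unfolding S_def by auto
  then have "card (S - U) \<le> card ({1..<gm n} - U) + card ({gm n..<2 * gm n} - U)"
    by (simp add: card_Un_le)
  also have "\<dots> \<le> 2" using twins[OF disjI1[OF refl]] twins[OF disjI2[OF refl]] by simp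
  finally have "card (S - U) \<le> 2" .
  moreover have "card (S \<inter> U) \<le> card U"
    using res by (intro card_mono) (auto simp: resolving_set_def carrierG_def finite_subset)
  moreover have "card S = card (S \<inter> U) + card (S - U)" unfolding S_def by (rule card_Int_Diff) simp
  ultimately show ?thesis using two_power_eq_double_gm[of n] n unfolding S_def by simp
qed

theorem mainTheorem6:
  fixes n :: nat
  assumes "n \<ge> 3"
  shows "metric_dim (carrierG n) (power_adj n) = 2 ^ n - 3"
proof (rule metric_dim_eqI)
  show "resolving_set (carrierG n) (power_adj n) ({2..<gm n} \<union> {gm n + 1..<2 * gm n})"
    using assms by (rule resolving_set_power_graph)
  show "card ({2..<gm n} \<union> {gm n + 1..<2 * gm n}) = 2 ^ n - 3"
    using assms gm_ge_4 two_power_eq_double_gm by (simp add: card_Un_disjoint)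
  show "2 ^ n - 3 \<le> card U" if "resolving_set (carrierG n) (power_adj n) U" for U
    using assms that by (intro card_resolving_set_power_graph_ge) simp_all
qed

end
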